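(* For every fixed integer $k\geq 0$ there exist constants $q^*_k$ and $C^*_k$ (depending only on $k$) such that for all integers $q\geq q^*_k$, $$\frac{2^q}{\binom{q}{\leq k}} \;\leq\; F^*_k(q)\;\leq\; \frac{2^q}{\binom{q}{\leq k}}+C^*_k .$$
   Context: Pathological liar game: fix integers $q,k\geq 0$. A state is a vector $\vec{x}=(x_0,\ldots,x_k)$ of nonnegative integers ($x_i$ = number of elements currently carrying $i$ lies; elements with $k+1$ lies are discarded). In each of $q$ rounds Paul chooses a legal question $\vec{a}=(a_0,\ldots,a_k)$ with integers $0\leq a_i\leq x_i$, and Carole answers Y or N; the new state is $Y(\vec{x},\vec{a})=(a_0,\,a_1+x_0-a_0,\,\ldots,\,a_k+x_{k-1}-a_{k-1})$ or $N(\vec{x},\vec{a})=(x_0-a_0,\,x_1-a_1+a_0,\,\ldots,\,x_k-a_k+a_{k-1})$ respectively. Paul wins the pathological game iff after $q$ rounds the state satisfies $\sum_{i=0}^k x_i\geq 1$. $F^*_k(q)$ denotes the minimum $n$ such that Paul has a winning strategy in the $q$-round pathological liar game with $k$ lies and initial state $(n,0,\ldots,0)$. Notation: $\binom{q}{\leq m}=\sum_{j=0}^m\binom{q}{j}$. *)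

theory Defs
  imports Complex_Main
begin

text \<open>States and questions are functions nat => nat; only indices 0..k are meaningful.
  Components above k are set to 0 by the transition maps.\<close>

definition legal :: "nat \<Rightarrow> (nat \<Rightarrow> nat) \<Rightarrow> (nat \<Rightarrow> nat) \<Rightarrow> bool" where
  "legal k x a \<longleftrightarrow> (\<forall>i\<le>k. a i \<le> x i)"

definition Yst :: "nat \<Rightarrow> (nat \<Rightarrow> nat) \<Rightarrow> (nat \<Rightarrow> nat) \<Rightarrow> (nat \<Rightarrow> nat)" where
  "Yst k x a = (\<lambda>i. if i = 0 then a 0
                     else if i \<le> k then a i + (x (i - 1) - a (i - 1)) else 0)"

definition Nst :: "nat \<Rightarrow> (nat \<Rightarrow> nat) \<Rightarrow> (nat \<Rightarrow> nat) \<Rightarrow> (nat \<Rightarrow> nat)" where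
  "Nst k x a = (\<lambda>i. if i = 0 then x 0 - a 0
                     else if i \<le> k then (x i - a i) + a (i - 1) else 0)"

fun paul_wins :: "nat \<Rightarrow> nat \<Rightarrow> (nat \<Rightarrow> nat) \<Rightarrow> bool" where
  "paul_wins k 0 x \<longleftrightarrow> (\<Sum>i\<le>k. x i) \<ge> 1"
| "paul_wins k (Suc q) x \<longleftrightarrow>
     (\<exists>a. legal k x a \<and> paul_wins k q (Yst k x a) \<and> paul_wins k q (Nst k x a))"

definition init_state :: "nat \<Rightarrow> (nat \<Rightarrow> nat)" where
  "init_state n = (\<lambda>i. if i = 0 then n else 0)"

definition Fstar :: "nat \<Rightarrow> nat \<Rightarrow> nat" where
  "Fstar k q = (LEAST n. paul_wins k q (init_state n))"

definition binom_le :: "nat \<Rightarrow> nat \<Rightarrow> nat" where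
  "binom_le q m = (\<Sum>j\<le>m. q choose j)"

end

theory Submission
  imports Defs
begin

(* The weight sum_i x_i * binom_le r (k - i) of a state with r rounds to go is split exactly
   between the answers Y and N, so Paul cannot win from a state of weight below 2^r; the initial
   state has weight n * binom_le q k, which gives the lower bound.

   For the upper bound Paul starts with 2^q div binom_le q k + 1 + (k + 1) * 4^k elements and
   splits every level below k in half, so that after t rounds level i holds at most
   n * (t choose i) / 2^t + i + 1 elements.  After 2k rounds the levels below k carry so little
   weight that the top level, whose elements have weight 1 each, can be split to give both answers
   weight at least 2^r; the imbalance of the first 2k rounds is paid for by the additive constant.
   In the last rounds at most k elements are left on each lower level, and moving one of them per
   round lowers the total number of lies still available until at most one lower element remains,
   where balancing alone wins. *)

section \<open>Partial sums of binomial coefficients\<close>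

lemma binom_le_0_left [simp]: "binom_le 0 j = 1"
  unfolding binom_le_def by (induction j) auto

lemma binom_le_0_right [simp]: "binom_le r 0 = 1"
  unfolding binom_le_def by simp

lemma binom_le_Suc_Suc: "binom_le (Suc r) (Suc j) = binom_le r (Suc j) + binom_le r j"
proof -
  have "binom_le (Suc r) (Suc j) = 1 + (\<Sum>i\<le>j. (r choose i) + (r choose Suc i))"
    unfolding binom_le_def by (simp add: sum.atMost_Suc_shift del: sum.atMost_Suc)
  also have "\<dots> = 1 + (\<Sum>i\<le>j. r choose Suc i) + binom_le r j"
    unfolding binom_le_def by (simp add: sum.distrib)
  also have "1 + (\<Sum>i\<le>j. r choose Suc i) = binom_le r (Suc j)"
    unfolding binom_le_def by (simp add: sum.atMost_Suc_shift del: sum.atMost_Suc)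
  finally show ?thesis .
qed

lemma binom_le_mono_right: "j \<le> j' \<Longrightarrow> binom_le r j \<le> binom_le r j'"
  unfolding binom_le_def by (rule sum_mono2) auto

lemma binom_le_mono_left: "r \<le> r' \<Longrightarrow> binom_le r j \<le> binom_le r' j"
proof (induction r' rule: dec_induct)
  case (step m)
  have "binom_le m j \<le> binom_le (Suc m) j"
    by (cases j) (simp_all add: binom_le_Suc_Suc)
  with step.IH show ?case by simp
qed simp

lemma binom_le_pos: "0 < binom_le r j"
  using binom_le_mono_right[of 0 j r] by simp

lemma binom_le_le_power: "binom_le r j \<le> 2 ^ r"
proof -
  have "binom_le r j \<le> (\<Sum>i\<le>max j r. r choose i)"
    unfolding binom_le_def by (rule sum_mono2) auto
  also have "\<dots> = (\<Sum>i\<le>r. r choose i)"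
    by (rule sum.mono_neutral_right) auto
  also have "\<dots> = 2 ^ r"
    by (rule choose_row_sum)
  finally show ?thesis .
qed

lemma binom_le_le_poly: "binom_le r k \<le> (r + 1) ^ k"
proof -
  have "binom_le r k \<le> (\<Sum>i\<le>k. (k choose i) * r ^ i)"
    unfolding binom_le_def
  proof (rule sum_mono)
    fix i assume "i \<in> {..k}"
    then have "1 \<le> k choose i"
      by (simp add: Suc_leI zero_less_binomial)
    moreover have "r choose i \<le> r ^ i"
      by (cases "i \<le> r") (auto simp: binomial_le_pow binomial_eq_0)
    ultimately show "r choose i \<le> (k choose i) * r ^ i"
      by (metis mult_1 mult_le_mono)
  qed
  also have "\<dots> = (r + 1) ^ k"
    by (subst binomial_ring) simp
  finally show ?thesis .
qed

lemma binom_le_add: "(\<Sum>i\<le>k. (t choose i) * binom_le r (k - i)) = binom_le (t + r) k"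
proof (induction r arbitrary: k)
  case 0
  then show ?case by (simp add: binom_le_def[of t])
next
  case (Suc r)
  show ?case
  proof (cases k)
    case (Suc j)
    have "(\<Sum>i\<le>Suc j. (t choose i) * binom_le (Suc r) (Suc j - i))
        = (\<Sum>i\<le>Suc j. (t choose i) * binom_le r (Suc j - i))
          + (\<Sum>i\<le>j. (t choose i) * binom_le r (j - i))"
      by (simp add: sum.distrib[symmetric] Suc_diff_le binom_le_Suc_Suc algebra_simps)
    also have "\<dots> = binom_le (t + Suc r) (Suc j)"
      using Suc.IH by (simp add: binom_le_Suc_Suc)
    finally show ?thesis using Suc by simp
  qed simp
qed

lemma binom_le_add_le: "binom_le (t + r) k \<le> binom_le t k * binom_le r k"
proof -
  have "binom_le (t + r) k = (\<Sum>i\<le>k. (t choose i) * binom_le r (k - i))"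
    by (rule binom_le_add[symmetric])
  also have "\<dots> \<le> (\<Sum>i\<le>k. (t choose i) * binom_le r k)"
    by (intro sum_mono mult_left_mono binom_le_mono_right) auto
  also have "\<dots> = binom_le t k * binom_le r k"
    unfolding binom_le_def by (simp add: sum_distrib_right)
  finally show ?thesis .
qed

lemma choose_le_binom_le_add: "t choose k \<le> binom_le (t + r) k"
proof -
  have "(t choose k) * binom_le r (k - k) \<le> (\<Sum>i\<le>k. (t choose i) * binom_le r (k - i))"
    by (rule member_le_sum) auto
  then show ?thesis
    by (simp add: binom_le_add)
qed

lemma binom_le_le_choose: "2 * k \<le> t \<Longrightarrow> binom_le t k \<le> (k + 1) * (t choose k)"
proof -
  assume "2 * k \<le> t"
  then have "binom_le t k \<le> (\<Sum>i\<le>k. t choose k)"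
    unfolding binom_le_def by (intro sum_mono binomial_mono) auto
  then show ?thesis by simp
qed

lemma poly_le_power_two:
  assumes "1 \<le> c" and "c * 2 ^ m * (m + 1) ^ (m + 1) \<le> r"
  shows "c * (r + 1) ^ m \<le> 2 ^ r"
proof -
  have "m + 1 \<le> (m + 1) ^ (m + 1)"
    by (rule self_le_power) simp_all
  also have "\<dots> \<le> c * 2 ^ m * (m + 1) ^ (m + 1)"
    using assms(1) by simp
  finally have mr: "m + 1 \<le> r"
    using assms(2) by linarith
  define R where "R = real r"
  have R1: "1 \<le> R"
    using mr unfolding R_def by simp
  have hyp: "real c * 2 ^ m * real (m + 1) ^ (m + 1) \<le> R"
  proof -
    have "real (c * 2 ^ m * (m + 1) ^ (m + 1)) \<le> real r"
      using assms(2) by (simp only: of_nat_le_iff)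
    then show ?thesis
      unfolding R_def by (simp only: of_nat_mult of_nat_power of_nat_numeral)
  qed
  have "real c * (R + 1) ^ m \<le> real c * (2 * R) ^ m"
    using R1 by (intro mult_left_mono power_mono) auto
  also have "\<dots> = real c * 2 ^ m * R ^ m"
    by (simp add: power_mult_distrib)
  also have "\<dots> \<le> R ^ (m + 1) / real (m + 1) ^ (m + 1)"
  proof -
    have "real c * 2 ^ m * real (m + 1) ^ (m + 1) * R ^ m \<le> R * R ^ m"
      using hyp R1 by (intro mult_right_mono) simp_all
    then show ?thesis
      by (simp add: pos_le_divide_eq mult_ac)
  qed
  also have "\<dots> = (R / real (m + 1)) ^ (m + 1)"
    by (simp add: power_divide)
  also have "\<dots> \<le> real (r choose (m + 1))"
    unfolding R_def using mr by (rule binomial_ge_n_over_k_pow_k)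
  also have "\<dots> \<le> 2 ^ r"
    using binomial_le_pow2[of r "m + 1"] unfolding of_nat_le_iff[symmetric, where 'a=real] by simp
  finally have "real (c * (r + 1) ^ m) \<le> real ((2::nat) ^ r)"
    unfolding R_def by (simp add: add.commute)
  then show ?thesis
    by (simp only: of_nat_le_iff)
qed

lemma eventually_binom_le_sq_le_power: "eventually (\<lambda>r. c * binom_le r k ^ 2 \<le> 2 ^ r) sequentially"
proof -
  have "c * binom_le r k ^ 2 \<le> 2 ^ r"
    if "Suc c * 2 ^ (2 * k) * (2 * k + 1) ^ (2 * k + 1) \<le> r" for r
  proof -
    have "binom_le r k ^ 2 \<le> ((r + 1) ^ k) ^ 2"
      by (intro power_mono binom_le_le_poly) simp
    also have "\<dots> = (r + 1) ^ (2 * k)"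
      by (metis power_mult mult.commute)
    finally have "c * binom_le r k ^ 2 \<le> Suc c * (r + 1) ^ (2 * k)"
      by (intro mult_mono) simp_all
    also have "\<dots> \<le> 2 ^ r"
      using that by (intro poly_le_power_two) simp_all
    finally show ?thesis .
  qed
  then show ?thesis
    unfolding eventually_sequentially by blast
qed

section \<open>The weight of a state\<close>

definition weight :: "nat \<Rightarrow> nat \<Rightarrow> (nat \<Rightarrow> nat) \<Rightarrow> nat" where
  "weight k r x = (\<Sum>i\<le>k. x i * binom_le r (k - i))"

definition low_weight :: "nat \<Rightarrow> nat \<Rightarrow> (nat \<Rightarrow> nat) \<Rightarrow> nat" where
  "low_weight k r x = (\<Sum>i<k. x i * binom_le r (k - i))"

definition yes_weight :: "nat \<Rightarrow> nat \<Rightarrow> (nat \<Rightarrow> nat) \<Rightarrow> (nat \<Rightarrow> nat) \<Rightarrow> nat" where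
  "yes_weight k r x a = (\<Sum>i<k. a i * binom_le r (k - i) + (x i - a i) * binom_le r (k - Suc i))"

definition no_weight :: "nat \<Rightarrow> nat \<Rightarrow> (nat \<Rightarrow> nat) \<Rightarrow> (nat \<Rightarrow> nat) \<Rightarrow> nat" where
  "no_weight k r x a = (\<Sum>i<k. (x i - a i) * binom_le r (k - i) + a i * binom_le r (k - Suc i))"

lemma weight_eq_low_weight: "weight k r x = low_weight k r x + x k"
  unfolding weight_def low_weight_def by (simp add: lessThan_Suc_atMost[symmetric])

lemma weight_init_state: "weight k r (init_state n) = n * binom_le r k"
proof -
  have "weight k r (init_state n) = (\<Sum>i\<le>k. if i = 0 then n * binom_le r (k - i) else 0)"
    unfolding weight_def init_state_def by (rule sum.cong) auto
  also have "\<dots> = n * binom_le r k"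
    by (subst sum.delta) auto
  finally show ?thesis .
qed

lemma sum_Yst:
  "m \<le> k \<Longrightarrow> (\<Sum>i\<le>m. Yst k x a i * f i) = (\<Sum>i\<le>m. a i * f i) + (\<Sum>i<m. (x i - a i) * f (Suc i))"
  by (induction m) (auto simp: Yst_def algebra_simps)

lemma sum_Nst:
  "m \<le> k \<Longrightarrow> (\<Sum>i\<le>m. Nst k x a i * f i) = (\<Sum>i\<le>m. (x i - a i) * f i) + (\<Sum>i<m. a i * f (Suc i))"
  by (induction m) (auto simp: Nst_def algebra_simps)

lemma weight_Yst: "weight k r (Yst k x a) = yes_weight k r x a + a k"
proof -
  have "weight k r (Yst k x a)
      = (\<Sum>i\<le>k. a i * binom_le r (k - i)) + (\<Sum>i<k. (x i - a i) * binom_le r (k - Suc i))"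
    unfolding weight_def by (rule sum_Yst) simp
  then show ?thesis
    unfolding yes_weight_def by (simp add: sum.distrib lessThan_Suc_atMost[symmetric])
qed

lemma weight_Nst: "weight k r (Nst k x a) = no_weight k r x a + (x k - a k)"
proof -
  have "weight k r (Nst k x a)
      = (\<Sum>i\<le>k. (x i - a i) * binom_le r (k - i)) + (\<Sum>i<k. a i * binom_le r (k - Suc i))"
    unfolding weight_def by (rule sum_Nst) simp
  then show ?thesis
    unfolding no_weight_def by (simp add: sum.distrib lessThan_Suc_atMost[symmetric])
qed

lemma yes_weight_add_no_weight:
  assumes "\<forall>i<k. a i \<le> x i"
  shows "yes_weight k r x a + no_weight k r x a = low_weight k (Suc r) x"
  unfolding yes_weight_def no_weight_def low_weight_def sum.distrib[symmetric]
proof (rule sum.cong)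
  fix i assume "i \<in> {..<k}"
  then have "k - i = Suc (k - Suc i)" and "x i = a i + (x i - a i)"
    using assms by auto
  then show "a i * binom_le r (k - i) + (x i - a i) * binom_le r (k - Suc i)
      + ((x i - a i) * binom_le r (k - i) + a i * binom_le r (k - Suc i))
      = x i * binom_le (Suc r) (k - i)"
    by (metis (no_types, lifting) binom_le_Suc_Suc add.commute add.left_commute distrib_left distrib_right)
qed simp

lemma weight_Suc_split:
  assumes "legal k x a"
  shows "weight k (Suc r) x = weight k r (Yst k x a) + weight k r (Nst k x a)"
proof -
  have "\<forall>i<k. a i \<le> x i" and "a k \<le> x k"
    using assms unfolding legal_def by auto
  then have "weight k (Suc r) x = yes_weight k r x a + a k + (no_weight k r x a + (x k - a k))"
    using yes_weight_add_no_weight[of k a x r] by (simp add: weight_eq_low_weight)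
  then show ?thesis
    by (simp only: weight_Yst weight_Nst)
qed

lemma paul_wins_imp_weight_ge: "paul_wins k r x \<Longrightarrow> 2 ^ r \<le> weight k r x"
proof (induction r arbitrary: x)
  case 0
  then show ?case by (simp add: weight_def)
next
  case (Suc r)
  then obtain a where "legal k x a" "paul_wins k r (Yst k x a)" "paul_wins k r (Nst k x a)"
    by auto
  then show ?case
    using Suc.IH[of "Yst k x a"] Suc.IH[of "Nst k x a"] by (simp add: weight_Suc_split)
qed

lemma Fstar_le: "paul_wins k q (init_state n) \<Longrightarrow> Fstar k q \<le> n"
  unfolding Fstar_def by (rule Least_le)

lemma Fstar_ge:
  assumes "paul_wins k q (init_state n)"
  shows "2 ^ q / real (binom_le q k) \<le> real (Fstar k q)"
proof -
  have "paul_wins k q (init_state (Fstar k q))"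
    unfolding Fstar_def using assms by (rule LeastI)
  then have "2 ^ q \<le> Fstar k q * binom_le q k"
    using paul_wins_imp_weight_ge weight_init_state by metis
  then have "2 ^ q \<le> real (Fstar k q) * real (binom_le q k)"
    by (metis of_nat_le_iff of_nat_mult of_nat_numeral of_nat_power)
  then show ?thesis
    using binom_le_pos[of q k] by (simp add: divide_le_eq)
qed

section \<open>Balancing with the top level, and the endgame\<close>

lemma yes_weight_cong: "\<forall>i<k. a' i = a i \<Longrightarrow> yes_weight k r x a' = yes_weight k r x a"
  unfolding yes_weight_def by (rule sum.cong) auto

lemma no_weight_cong: "\<forall>i<k. a' i = a i \<Longrightarrow> no_weight k r x a' = no_weight k r x a"
  unfolding no_weight_def by (rule sum.cong) auto

(* Top-level elements have weight 1, so they can top up the yes side to exactly 2^r. *)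
lemma top_level_balance:
  assumes low: "\<forall>i<k. a i \<le> x i"
    and yes: "yes_weight k r x a \<le> 2 ^ r" and no: "no_weight k r x a \<le> 2 ^ r"
    and W: "2 ^ Suc r \<le> weight k (Suc r) x"
  obtains a' where "legal k x a'" "\<forall>i<k. a' i = a i"
    "2 ^ r \<le> weight k r (Yst k x a')" "2 ^ r \<le> weight k r (Nst k x a')"
proof -
  define a' where "a' = a(k := 2 ^ r - yes_weight k r x a)"
  have agree: "\<forall>i<k. a' i = a i" and a'_top: "a' k = 2 ^ r - yes_weight k r x a"
    unfolding a'_def by simp_all
  have split: "weight k (Suc r) x = yes_weight k r x a + no_weight k r x a + x k"
    using yes_weight_add_no_weight[OF low] by (simp add: weight_eq_low_weight)
  have top: "a' k \<le> x k"
    using split W no a'_top by simp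
  have "legal k x a'"
    unfolding legal_def using low agree top by (metis le_neq_implies_less)
  moreover have "2 ^ r \<le> weight k r (Yst k x a')"
    using yes a'_top by (simp add: weight_Yst yes_weight_cong[OF agree])
  moreover have "2 ^ r \<le> weight k r (Nst k x a')"
    using split W yes top a'_top by (simp add: weight_Nst no_weight_cong[OF agree])
  ultimately show ?thesis
    using that agree by blast
qed

definition low_count :: "nat \<Rightarrow> (nat \<Rightarrow> nat) \<Rightarrow> nat" where
  "low_count k x = (\<Sum>i<k. x i)"

definition lie_budget :: "nat \<Rightarrow> (nat \<Rightarrow> nat) \<Rightarrow> nat" where
  "lie_budget k x = (\<Sum>i\<le>k. x i * (k - i))"

lemma mult_add_diff_mult_le:
  fixes a x b c d :: nat
  assumes "a \<le> x" "b \<le> d" "c \<le> d"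
  shows "a * b + (x - a) * c \<le> x * d"
proof -
  have "a * b + (x - a) * c \<le> a * d + (x - a) * d"
    using assms by (intro add_mono mult_left_mono) auto
  also have "\<dots> = x * d"
    using assms(1) by (simp add: distrib_right[symmetric])
  finally show ?thesis .
qed

lemma yes_weight_le: "\<forall>i<k. a i \<le> x i \<Longrightarrow> yes_weight k r x a \<le> low_count k x * binom_le r k"
  unfolding yes_weight_def low_count_def sum_distrib_right
  by (intro sum_mono mult_add_diff_mult_le binom_le_mono_right) auto

lemma no_weight_le: "\<forall>i<k. a i \<le> x i \<Longrightarrow> no_weight k r x a \<le> low_count k x * binom_le r k"
  unfolding no_weight_def low_count_def sum_distrib_right
proof (rule sum_mono)
  fix i assume "\<forall>i<k. a i \<le> x i" "i \<in> {..<k}"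
  then have "x i - (x i - a i) = a i"
    by simp
  then show "(x i - a i) * binom_le r (k - i) + a i * binom_le r (k - Suc i) \<le> x i * binom_le r k"
    using mult_add_diff_mult_le[of "x i - a i" "x i" "binom_le r (k - i)" "binom_le r k" "binom_le r (k - Suc i)"]
    by (simp add: binom_le_mono_right)
qed

lemma low_count_Yst_le:
  assumes "\<forall>i<k. a i \<le> x i"
  shows "low_count k (Yst k x a) \<le> low_count k x"
proof (cases k)
  case (Suc m)
  have "low_count k (Yst k x a) = (\<Sum>i\<le>m. a i) + (\<Sum>i<m. x i - a i)"
    unfolding low_count_def Suc lessThan_Suc_atMost using sum_Yst[of m k x a "\<lambda>_. 1"] Suc by simp
  also have "\<dots> \<le> (\<Sum>i\<le>m. a i) + (\<Sum>i\<le>m. x i - a i)"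
    by (intro add_left_mono sum_mono2) auto
  also have "\<dots> = low_count k x"
    unfolding low_count_def Suc lessThan_Suc_atMost sum.distrib[symmetric]
    using assms Suc by (intro sum.cong) auto
  finally show ?thesis .
qed (simp add: low_count_def)

lemma low_count_Nst_le:
  assumes "\<forall>i<k. a i \<le> x i"
  shows "low_count k (Nst k x a) \<le> low_count k x"
proof (cases k)
  case (Suc m)
  have "low_count k (Nst k x a) = (\<Sum>i\<le>m. x i - a i) + (\<Sum>i<m. a i)"
    unfolding low_count_def Suc lessThan_Suc_atMost using sum_Nst[of m k x a "\<lambda>_. 1"] Suc by simp
  also have "\<dots> \<le> (\<Sum>i\<le>m. x i - a i) + (\<Sum>i\<le>m. a i)"
    by (intro add_left_mono sum_mono2) auto
  also have "\<dots> = low_count k x"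
    unfolding low_count_def Suc lessThan_Suc_atMost sum.distrib[symmetric]
    using assms Suc by (intro sum.cong) auto
  finally show ?thesis .
qed (simp add: low_count_def)

lemma lie_budget_Yst:
  assumes "\<forall>i<k. a i \<le> x i"
  shows "lie_budget k (Yst k x a) + (\<Sum>i<k. x i - a i) = lie_budget k x"
proof -
  have "lie_budget k (Yst k x a) = (\<Sum>i\<le>k. a i * (k - i)) + (\<Sum>i<k. (x i - a i) * (k - Suc i))"
    unfolding lie_budget_def by (rule sum_Yst) simp
  then have "lie_budget k (Yst k x a) + (\<Sum>i<k. x i - a i)
      = (\<Sum>i<k. a i * (k - i) + ((x i - a i) * (k - Suc i) + (x i - a i)))"
    by (simp add: sum.distrib lessThan_Suc_atMost[symmetric])
  also have "\<dots> = (\<Sum>i<k. x i * (k - i))"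
  proof (rule sum.cong)
    fix i assume "i \<in> {..<k}"
    then have "k - i = Suc (k - Suc i)" "x i = a i + (x i - a i)"
      using assms by auto
    then show "a i * (k - i) + ((x i - a i) * (k - Suc i) + (x i - a i)) = x i * (k - i)"
      by (metis (no_types, lifting) distrib_right mult_Suc_right add.commute)
  qed simp
  also have "\<dots> = lie_budget k x"
    unfolding lie_budget_def by (simp add: lessThan_Suc_atMost[symmetric])
  finally show ?thesis .
qed

lemma lie_budget_Nst:
  assumes "\<forall>i<k. a i \<le> x i"
  shows "lie_budget k (Nst k x a) + (\<Sum>i<k. a i) = lie_budget k x"
proof -
  have "lie_budget k (Nst k x a) = (\<Sum>i\<le>k. (x i - a i) * (k - i)) + (\<Sum>i<k. a i * (k - Suc i))"
    unfolding lie_budget_def by (rule sum_Nst) simp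
  then have "lie_budget k (Nst k x a) + (\<Sum>i<k. a i)
      = (\<Sum>i<k. (x i - a i) * (k - i) + (a i * (k - Suc i) + a i))"
    by (simp add: sum.distrib lessThan_Suc_atMost[symmetric])
  also have "\<dots> = (\<Sum>i<k. x i * (k - i))"
  proof (rule sum.cong)
    fix i assume "i \<in> {..<k}"
    then have "k - i = Suc (k - Suc i)" "x i = a i + (x i - a i)"
      using assms by auto
    then show "(x i - a i) * (k - i) + (a i * (k - Suc i) + a i) = x i * (k - i)"
      by (metis (no_types, lifting) distrib_right mult_Suc_right add.commute)
  qed simp
  also have "\<dots> = lie_budget k x"
    unfolding lie_budget_def by (simp add: lessThan_Suc_atMost[symmetric])
  finally show ?thesis .
qed

lemma low_count_le_lie_budget: "low_count k x \<le> lie_budget k x"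
proof -
  have "low_count k x \<le> (\<Sum>i<k. x i * (k - i))"
    unfolding low_count_def by (rule sum_mono) auto
  also have "\<dots> = lie_budget k x"
    unfolding lie_budget_def by (simp add: lessThan_Suc_atMost[symmetric])
  finally show ?thesis .
qed

lemma legal_imp_low_le: "legal k x a \<Longrightarrow> \<forall>i<k. a i \<le> x i"
  unfolding legal_def by auto

lemma paul_wins_low_count_le_1: "low_count k x \<le> 1 \<Longrightarrow> 2 ^ r \<le> weight k r x \<Longrightarrow> paul_wins k r x"
proof (induction r arbitrary: x)
  case 0
  then show ?case by (simp add: weight_def)
next
  case (Suc r)
  have low: "\<forall>i<k. (0::nat) \<le> x i"
    by simp
  have "low_count k x * binom_le r k \<le> 1 * binom_le r k"
    using Suc.prems(1) by (rule mult_le_mono1)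
  then have bound: "low_count k x * binom_le r k \<le> 2 ^ r"
    using binom_le_le_power[of r k] by linarith
  obtain a where a: "legal k x a" "2 ^ r \<le> weight k r (Yst k x a)" "2 ^ r \<le> weight k r (Nst k x a)"
    using top_level_balance[OF low order_trans[OF yes_weight_le[OF low] bound]
        order_trans[OF no_weight_le[OF low] bound] Suc.prems(2)] by blast
  have "low_count k (Yst k x a) \<le> 1" "low_count k (Nst k x a) \<le> 1"
    using low_count_Yst_le[OF legal_imp_low_le[OF a(1)]] low_count_Nst_le[OF legal_imp_low_le[OF a(1)]]
      Suc.prems(1) by simp_all
  with a Suc.IH show ?case
    by auto
qed

lemma single_low_question:
  assumes "0 < low_count k x"
  obtains b where "\<forall>i<k. b i \<le> x i" "(\<Sum>i<k. b i) = 1"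
proof -
  have "\<exists>i<k. 0 < x i"
  proof (rule ccontr)
    assume "\<not> (\<exists>i<k. 0 < x i)"
    then have "low_count k x = 0"
      unfolding low_count_def by simp
    with assms show False by simp
  qed
  then obtain i0 where "i0 < k" "0 < x i0"
    by blast
  then show ?thesis
    using that[of "\<lambda>i. if i = i0 then 1 else 0"] by simp
qed

lemma lie_budget_children_less:
  assumes low: "\<forall>i<k. a i \<le> x i" and moved: "(\<Sum>i<k. a i) = 1" and "2 \<le> low_count k x"
  shows "lie_budget k (Yst k x a) < lie_budget k x" and "lie_budget k (Nst k x a) < lie_budget k x"
proof -
  have "(\<Sum>i<k. x i - a i) = low_count k x - 1"
    using sum_subtractf_nat[of "{..<k}" a x] low moved unfolding low_count_def by simp
  then show "lie_budget k (Yst k x a) < lie_budget k x"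
    using lie_budget_Yst[OF low] \<open>2 \<le> low_count k x\<close> by simp
  show "lie_budget k (Nst k x a) < lie_budget k x"
    using lie_budget_Nst[OF low] moved by simp
qed

lemma paul_wins_endgame:
  assumes M: "\<forall>r\<ge>R0. M * binom_le r k \<le> 2 ^ r"
  shows "low_count k x \<le> M \<Longrightarrow> lie_budget k x + R0 \<le> r \<Longrightarrow> 2 ^ r \<le> weight k r x
    \<Longrightarrow> paul_wins k r x"
proof (induction r arbitrary: x)
  case 0
  then show ?case by (simp add: weight_def)
next
  case (Suc r)
  show ?case
  proof (cases "low_count k x \<le> 1")
    case True
    then show ?thesis
      using paul_wins_low_count_le_1 Suc.prems(3) by blast
  next
    case False
    then have "R0 \<le> r"
      using low_count_le_lie_budget[of k x] Suc.prems(2) by simp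
    then have bound: "low_count k x * binom_le r k \<le> 2 ^ r"
      using M Suc.prems(1) by (meson order_trans mult_le_mono1)
    \<comment> \<open>Moving a single low element makes the lie budget drop on both sides.\<close>
    obtain b where low: "\<forall>i<k. b i \<le> x i" and one: "(\<Sum>i<k. b i) = 1"
      using single_low_question[of k x] False by auto
    obtain a where a: "legal k x a" "\<forall>i<k. a i = b i"
        "2 ^ r \<le> weight k r (Yst k x a)" "2 ^ r \<le> weight k r (Nst k x a)"
      using top_level_balance[OF low order_trans[OF yes_weight_le[OF low] bound]
          order_trans[OF no_weight_le[OF low] bound] Suc.prems(3)] by blast
    have low': "\<forall>i<k. a i \<le> x i"
      using a(1) by (rule legal_imp_low_le)
    have "(\<Sum>i<k. a i) = 1"
      using a(2) one by simp
    then have "lie_budget k (Yst k x a) < lie_budget k x" "lie_budget k (Nst k x a) < lie_budget k x"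
      using lie_budget_children_less[OF low'] False by simp_all
    moreover have "low_count k (Yst k x a) \<le> M" "low_count k (Nst k x a) \<le> M"
      using low_count_Yst_le[OF low'] low_count_Nst_le[OF low'] Suc.prems(1) by simp_all
    ultimately have "paul_wins k r (Yst k x a)" "paul_wins k r (Nst k x a)"
      using Suc.IH a(3,4) Suc.prems(2) by simp_all
    then show ?thesis
      using a(1) by auto
  qed
qed

section \<open>Halving questions\<close>

definition half_question :: "(nat \<Rightarrow> nat) \<Rightarrow> nat \<Rightarrow> nat" where
  "half_question x i = (x i + 1) div 2"

lemma legal_half_question: "legal k x (half_question x)"
  unfolding legal_def half_question_def by auto

lemma Yst_halving_le:
  assumes "\<forall>j<k. a j = half_question x j" "i < k"
  shows "2 * Yst k x a i \<le> x i + (if i = 0 then 0 else x (i - 1)) + 1"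
  using assms by (cases i) (auto simp: Yst_def half_question_def)

lemma Nst_halving_le:
  assumes "\<forall>j<k. a j = half_question x j" "i < k"
  shows "2 * Nst k x a i \<le> x i + (if i = 0 then 0 else x (i - 1)) + 1"
  using assms by (cases i) (auto simp: Nst_def half_question_def)

(* x i \<le> n * (t choose i) / 2^t + i + 1, with the denominator cleared: the binomial profile
   of n elements after t halving rounds, plus a rounding allowance. *)
definition below_profile :: "nat \<Rightarrow> nat \<Rightarrow> nat \<Rightarrow> (nat \<Rightarrow> nat) \<Rightarrow> bool" where
  "below_profile k n t x \<longleftrightarrow> (\<forall>i<k. 2 ^ t * x i \<le> n * (t choose i) + 2 ^ t * (i + 1))"

lemma below_profile_init_state: "below_profile k n 0 (init_state n)"
  unfolding below_profile_def init_state_def by simp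

lemma below_profile_Suc:
  assumes x: "below_profile k n t x"
    and y: "\<forall>i<k. 2 * y i \<le> x i + (if i = 0 then 0 else x (i - 1)) + 1"
  shows "below_profile k n (Suc t) y"
  unfolding below_profile_def
proof (intro allI impI)
  fix i assume i: "i < k"
  have "2 ^ t * (2 * y i) \<le> 2 ^ t * (x i + (if i = 0 then 0 else x (i - 1)) + 1)"
    using y i by (intro mult_le_mono2) blast
  then have "2 ^ Suc t * y i \<le> 2 ^ t * (x i + (if i = 0 then 0 else x (i - 1)) + 1)"
    by (simp add: mult_ac)
  also have "\<dots> \<le> n * (Suc t choose i) + 2 ^ Suc t * (i + 1)"
  proof (cases i)
    case 0
    have "2 ^ t * x 0 \<le> n * (t choose 0) + 2 ^ t * (0 + 1)"
      using x i 0 unfolding below_profile_def by blast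
    then show ?thesis
      using 0 by (simp add: algebra_simps)
  next
    case (Suc j)
    have "2 ^ t * x i \<le> n * (t choose i) + 2 ^ t * (i + 1)"
      and "2 ^ t * x j \<le> n * (t choose j) + 2 ^ t * (j + 1)"
      using x i Suc unfolding below_profile_def by auto
    then show ?thesis
      using Suc by (simp add: algebra_simps)
  qed
  finally show "2 ^ Suc t * y i \<le> n * (Suc t choose i) + 2 ^ Suc t * (i + 1)" .
qed

lemma below_profile_halving:
  assumes "below_profile k n t x" "\<forall>j<k. a j = half_question x j"
  shows "below_profile k n (Suc t) (Yst k x a)" "below_profile k n (Suc t) (Nst k x a)"
  using assms Yst_halving_le Nst_halving_le by (blast intro: below_profile_Suc)+

lemma halving_yes_no_weight:
  assumes "\<forall>j<k. a j = half_question x j"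
  shows "no_weight k r x a \<le> yes_weight k r x a"
    and "yes_weight k r x a \<le> no_weight k r x a + k * binom_le r k"
proof -
  have terms: "(x i - a i) * binom_le r (k - i) + a i * binom_le r (k - Suc i)
        \<le> a i * binom_le r (k - i) + (x i - a i) * binom_le r (k - Suc i)
      \<and> a i * binom_le r (k - i) + (x i - a i) * binom_le r (k - Suc i)
        \<le> (x i - a i) * binom_le r (k - i) + a i * binom_le r (k - Suc i) + binom_le r k"
    if "i < k" for i
  proof -
    have "binom_le r (k - Suc i) \<le> binom_le r (k - i)" "binom_le r (k - i) \<le> binom_le r k"
      by (simp_all add: binom_le_mono_right)
    moreover define u where "u = x i - a i"
    moreover have "a i = u \<or> a i = Suc u"
      using assms that unfolding u_def half_question_def by auto
    ultimately show ?thesis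
      unfolding u_def[symmetric] by (auto simp: algebra_simps)
  qed
  show "no_weight k r x a \<le> yes_weight k r x a"
    unfolding yes_weight_def no_weight_def using terms by (intro sum_mono) auto
  have "yes_weight k r x a
      \<le> (\<Sum>i<k. (x i - a i) * binom_le r (k - i) + a i * binom_le r (k - Suc i) + binom_le r k)"
    unfolding yes_weight_def using terms by (intro sum_mono) auto
  then show "yes_weight k r x a \<le> no_weight k r x a + k * binom_le r k"
    unfolding no_weight_def by (simp add: sum.distrib)
qed

lemma weight_half_question:
  shows "weight k (Suc r) x \<le> 2 * weight k r (Yst k x (half_question x)) + (k * binom_le r k + 1)"
    and "weight k (Suc r) x \<le> 2 * weight k r (Nst k x (half_question x)) + (k * binom_le r k + 1)"
proof -
  let ?a = "half_question x"
  have "\<forall>i<k. ?a i \<le> x i"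
    using legal_half_question[of k x] by (rule legal_imp_low_le)
  then have split: "weight k (Suc r) x = yes_weight k r x ?a + no_weight k r x ?a + x k"
    using yes_weight_add_no_weight by (simp add: weight_eq_low_weight)
  have "x k \<le> 2 * ?a k" "x k \<le> 2 * (x k - ?a k) + 1"
    unfolding half_question_def by presburger+
  then show "weight k (Suc r) x \<le> 2 * weight k r (Yst k x ?a) + (k * binom_le r k + 1)"
    and "weight k (Suc r) x \<le> 2 * weight k r (Nst k x ?a) + (k * binom_le r k + 1)"
    using split halving_yes_no_weight[of k ?a x r] by (simp_all add: weight_Yst weight_Nst)
qed

lemma low_weight_below_profile:
  assumes "below_profile k n t x"
  shows "2 ^ t * low_weight k r x \<le> n * (binom_le (t + r) k - (t choose k)) + 2 ^ t * (k * k * binom_le r k)"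
proof -
  have "2 ^ t * low_weight k r x = (\<Sum>i<k. 2 ^ t * x i * binom_le r (k - i))"
    unfolding low_weight_def by (simp add: sum_distrib_left mult.assoc)
  also have "\<dots> \<le> (\<Sum>i<k. (n * (t choose i) + 2 ^ t * (i + 1)) * binom_le r (k - i))"
    using assms unfolding below_profile_def by (intro sum_mono mult_right_mono) auto
  also have "\<dots> = n * (\<Sum>i<k. (t choose i) * binom_le r (k - i))
      + 2 ^ t * (\<Sum>i<k. (i + 1) * binom_le r (k - i))"
    by (simp add: sum.distrib sum_distrib_left algebra_simps)
  also have "(\<Sum>i<k. (t choose i) * binom_le r (k - i)) = binom_le (t + r) k - (t choose k)"
    using binom_le_add[of t r k] by (simp add: lessThan_Suc_atMost[symmetric])
  also have "(\<Sum>i<k. (i + 1) * binom_le r (k - i)) \<le> (\<Sum>i<k. k * binom_le r k)"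
    by (intro sum_mono mult_le_mono binom_le_mono_right) auto
  finally show ?thesis
    by (simp add: mult.assoc)
qed

section \<open>Paul's strategy\<close>

lemma halving_yes_weight_le:
  assumes profile: "below_profile k n t x" and tq: "t + Suc r = q"
    and balance: "n * (binom_le q k - (t choose k)) + 2 ^ t * ((k * k + k) * binom_le (Suc r) k) \<le> 2 ^ q"
  shows "yes_weight k r x (half_question x) \<le> 2 ^ r"
proof -
  let ?a = "half_question x"
  have low: "\<forall>i<k. ?a i \<le> x i"
    using legal_half_question by (rule legal_imp_low_le)
  have "2 * yes_weight k r x ?a \<le> yes_weight k r x ?a + no_weight k r x ?a + k * binom_le r k"
    using halving_yes_no_weight(2)[of k ?a x r] by simp
  also have "\<dots> \<le> low_weight k (Suc r) x + k * binom_le (Suc r) k"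
    using yes_weight_add_no_weight[OF low, of r] binom_le_mono_left[of r "Suc r" k] by simp
  finally have "2 ^ t * (2 * yes_weight k r x ?a)
      \<le> 2 ^ t * low_weight k (Suc r) x + 2 ^ t * (k * binom_le (Suc r) k)"
    by (metis add_mult_distrib2 mult_le_mono2)
  also have "\<dots> \<le> n * (binom_le q k - (t choose k)) + 2 ^ t * ((k * k + k) * binom_le (Suc r) k)"
    using low_weight_below_profile[OF profile, of "Suc r"] tq by (simp add: algebra_simps)
  also have "\<dots> \<le> 2 ^ t * (2 * 2 ^ r)"
    using balance tq by (metis power_Suc power_add)
  finally show ?thesis
    by simp
qed

lemma paul_wins_middle:
  assumes endgame: "\<And>x. below_profile k n (q - R) x \<Longrightarrow> 2 ^ R \<le> weight k R x \<Longrightarrow> paul_wins k R x"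
    and balance: "\<And>s. R < s \<Longrightarrow> s \<le> S \<Longrightarrow>
      n * (binom_le q k - ((q - s) choose k)) + 2 ^ (q - s) * ((k * k + k) * binom_le s k) \<le> 2 ^ q"
    and "S \<le> q"
  shows "R \<le> s \<Longrightarrow> s \<le> S \<Longrightarrow> below_profile k n (q - s) x \<Longrightarrow> 2 ^ s \<le> weight k s x
    \<Longrightarrow> paul_wins k s x"
proof (induction s arbitrary: x)
  case 0
  then show ?case
    using endgame by simp
next
  case (Suc r)
  show ?case
  proof (cases "Suc r = R")
    case True
    then show ?thesis
      using endgame Suc.prems(3,4) by blast
  next
    case False
    define t where "t = q - Suc r"
    have tq: "t + Suc r = q"
      using Suc.prems(2) \<open>S \<le> q\<close> unfolding t_def by simp
    let ?a = "half_question x"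
    have low: "\<forall>i<k. ?a i \<le> x i"
      using legal_half_question by (rule legal_imp_low_le)
    have yes: "yes_weight k r x ?a \<le> 2 ^ r"
      using halving_yes_weight_le[OF Suc.prems(3)[folded t_def] tq] balance[of "Suc r"] False Suc.prems(1,2)
      unfolding t_def by simp
    moreover have "no_weight k r x ?a \<le> 2 ^ r"
      using halving_yes_no_weight(1)[of k ?a x r] yes by simp
    ultimately obtain a where a: "legal k x a" "\<forall>i<k. a i = half_question x i"
        "2 ^ r \<le> weight k r (Yst k x a)" "2 ^ r \<le> weight k r (Nst k x a)"
      using top_level_balance[OF low _ _ Suc.prems(4)] by blast
    have "q - r = Suc t"
      using tq by simp
    then have "below_profile k n (q - r) (Yst k x a)" "below_profile k n (q - r) (Nst k x a)"
      using below_profile_halving[OF Suc.prems(3)[folded t_def] a(2)] by simp_all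
    moreover have "R \<le> r" "r \<le> S"
      using False Suc.prems(1,2) by simp_all
    ultimately show ?thesis
      using a Suc.IH by auto
  qed
qed

(* In the first T rounds the low levels are too heavy to balance with the top level. A halving
   round loses at most k * binom_le r k + 1 \<le> P of balance, paid for by the surplus (2^d - 1) * P. *)
lemma paul_wins_opening:
  assumes middle: "\<And>x. below_profile k n T x \<Longrightarrow> 2 ^ (q - T) \<le> weight k (q - T) x
      \<Longrightarrow> paul_wins k (q - T) x"
    and P: "k * binom_le q k + 1 \<le> P" and "T \<le> q"
  shows "d \<le> T \<Longrightarrow> below_profile k n (T - d) x
    \<Longrightarrow> 2 ^ (q - T + d) + (2 ^ d - 1) * P \<le> weight k (q - T + d) x \<Longrightarrow> paul_wins k (q - T + d) x"
proof (induction d arbitrary: x)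
  case 0
  then show ?case
    using middle by simp
next
  case (Suc d)
  define r where "r = q - T + d"
  have "binom_le r k \<le> binom_le q k"
    using Suc.prems(1) \<open>T \<le> q\<close> unfolding r_def by (intro binom_le_mono_left) simp
  then have loss: "k * binom_le r k + 1 \<le> P"
    using P by (meson add_le_mono1 le_trans mult_le_mono2)
  have rounds: "q - T + Suc d = Suc r"
    unfolding r_def by simp
  have "(1::nat) \<le> 2 ^ d"
    by simp
  then have "2 ^ Suc d - 1 = 2 * (2 ^ d - 1) + (1::nat)"
    unfolding power_Suc by linarith
  then have W: "2 * 2 ^ r + (2 * (2 ^ d - 1) + 1) * P \<le> weight k (Suc r) x"
    using Suc.prems(3) unfolding rounds by simp
  have child: "2 ^ r + (2 ^ d - 1) * P \<le> weight k r y"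
    if "weight k (Suc r) x \<le> 2 * weight k r y + (k * binom_le r k + 1)" for y
  proof -
    have "2 * (2 ^ r + (2 ^ d - 1) * P) + P \<le> 2 * weight k r y + P"
      using W that loss by (simp add: algebra_simps)
    then show ?thesis
      by simp
  qed
  let ?a = "half_question x"
  have "below_profile k n (T - d) (Yst k x ?a)" "below_profile k n (T - d) (Nst k x ?a)"
    using below_profile_halving[of k n "T - Suc d" x ?a] Suc.prems(1,2) by (simp_all add: Suc_diff_Suc)
  then have "paul_wins k r (Yst k x ?a)" "paul_wins k r (Nst k x ?a)"
    using Suc.IH Suc.prems(1) child weight_half_question unfolding r_def by simp_all
  then show ?case
    unfolding rounds using legal_half_question by auto
qed

lemma choose_mult_less_power:
  assumes n: "n * binom_le (R + t) k \<le> 2 * 2 ^ (R + t)" and t: "2 * k * 2 ^ R + k \<le> t" and "i < k"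
  shows "n * (t choose i) < 2 ^ t"
proof -
  obtain j where k: "k = Suc j"
    using \<open>i < k\<close> by (cases k) auto
  have "2 * k * 1 \<le> 2 * k * 2 ^ R"
    by (intro mult_le_mono2) simp
  then have "t choose i \<le> t choose j"
    using assms k by (intro binomial_mono) auto
  then have "n * (t choose i) * (t - j) \<le> n * ((t - j) * (t choose j))"
    by (simp add: mult_ac)
  also have "(t - j) * (t choose j) = k * (t choose k)"
    unfolding k using binomial_absorb_comp[of t j] binomial_absorption[of j t] by simp
  also have "n * (k * (t choose k)) \<le> k * (n * binom_le (R + t) k)"
    using choose_le_binom_le_add[of t k R] by (simp add: add.commute mult.left_commute)
  also have "\<dots> \<le> k * (2 * 2 ^ (R + t))"
    using n by simp
  also have "\<dots> = (2 * k * 2 ^ R) * 2 ^ t"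
    by (simp add: power_add)
  also have "\<dots> < (t - j) * 2 ^ t"
    using t k by simp
  finally show ?thesis
    by simp
qed

lemma below_profile_le:
  assumes "below_profile k n t x" and small: "\<forall>i<k. n * (t choose i) < 2 ^ t" and "i < k"
  shows "x i \<le> k"
proof -
  have "2 ^ t * x i \<le> n * (t choose i) + 2 ^ t * (i + 1)"
    using assms unfolding below_profile_def by blast
  also have "\<dots> < 2 ^ t * (i + 2)"
    using small \<open>i < k\<close> by simp
  finally have "x i < i + 2"
    by (simp only: mult_less_cancel1)
  then show ?thesis
    using \<open>i < k\<close> by simp
qed

lemma low_count_le: "\<forall>i<k. x i \<le> k \<Longrightarrow> low_count k x \<le> k * k"
  unfolding low_count_def using sum_mono[of "{..<k}" x "\<lambda>_. k"] by simp

lemma lie_budget_le: "\<forall>i<k. x i \<le> k \<Longrightarrow> lie_budget k x \<le> k * k * k"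
proof -
  assume "\<forall>i<k. x i \<le> k"
  then have "(\<Sum>i<k. x i * (k - i)) \<le> (\<Sum>i<k. k * k)"
    by (intro sum_mono mult_le_mono) auto
  then show ?thesis
    unfolding lie_budget_def by (simp add: lessThan_Suc_atMost[symmetric])
qed

lemma balance_condition:
  assumes ts: "t + s = q" and "2 * k \<le> t"
    and s_large: "2 * (k + 1) ^ 3 * binom_le s k ^ 2 \<le> 2 ^ s"
    and q_large: "2 * (E + 1) * binom_le q k ^ 2 \<le> 2 ^ q"
    and n_lower: "2 ^ q \<le> n * binom_le q k"
    and n_upper: "n * binom_le q k \<le> 2 ^ q + (E + 1) * binom_le q k"
  shows "n * (binom_le q k - (t choose k)) + 2 ^ t * ((k * k + k) * binom_le s k) \<le> 2 ^ q"
proof -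
  define V c b K where "V = binom_le q k" and "c = t choose k" and "b = binom_le s k"
    and "K = k * k + k"
  have c1: "1 \<le> c"
    unfolding c_def using \<open>2 * k \<le> t\<close> by (simp add: Suc_leI zero_less_binomial)
  have cV: "c \<le> V"
    unfolding c_def V_def using choose_le_binom_le_add[of t k s] ts by simp
  have "V \<le> binom_le t k * b"
    unfolding V_def b_def using binom_le_add_le[of t s k] ts by simp
  also have "\<dots> \<le> (k + 1) * c * b"
    unfolding c_def using binom_le_le_choose[OF \<open>2 * k \<le> t\<close>] by simp
  finally have V_le: "V \<le> (k + 1) * c * b" .
  have "2 * (2 ^ t * K * b * V) \<le> 2 * (2 ^ t * K * b * ((k + 1) * c * b))"
    using V_le by simp
  also have "\<dots> = 2 ^ t * c * (2 * (K * (k + 1)) * b ^ 2)"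
    by (simp only: power2_eq_square mult.assoc mult.commute mult.left_commute)
  also have "\<dots> \<le> 2 ^ t * c * (2 * (k + 1) ^ 3 * b ^ 2)"
    unfolding K_def by (intro mult_le_mono2 mult_le_mono1) (simp add: power3_eq_cube algebra_simps)
  also have "\<dots> \<le> 2 ^ t * c * 2 ^ s"
    using s_large unfolding b_def by simp
  also have "\<dots> = 2 ^ q * c"
    unfolding ts[symmetric] power_add by (simp only: mult.assoc mult.commute mult.left_commute)
  finally have A: "2 * (2 ^ t * K * b * V) \<le> 2 ^ q * c" .
  have "2 * ((E + 1) * V * V) \<le> 2 ^ q * 1"
    using q_large unfolding V_def power2_eq_square by (simp only: mult.assoc mult.commute mult.left_commute mult_1_right)
  also have "\<dots> \<le> 2 ^ q * c"
    using c1 by (rule mult_le_mono2)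
  finally have B: "2 * ((E + 1) * V * V) \<le> 2 ^ q * c" .
  have "((E + 1) * V + 2 ^ t * K * b) * V \<le> 2 ^ q * c"
    using A B by (simp add: algebra_simps)
  also have "\<dots> \<le> (n * c) * V"
    using n_lower unfolding V_def by (simp add: mult_ac)
  finally have C: "(E + 1) * V + 2 ^ t * K * b \<le> n * c"
    using binom_le_pos[of q k] unfolding V_def by simp
  have "n * c \<le> n * V"
    using cV by simp
  then show ?thesis
    using C n_upper unfolding V_def[symmetric] c_def[symmetric] b_def[symmetric] K_def[symmetric]
    by (simp add: diff_mult_distrib2 mult.assoc)
qed

lemma div_Suc_add_mult_bounds:
  fixes m V E :: nat
  assumes "0 < V"
  shows "m + E * V \<le> (m div V + 1 + E) * V" and "(m div V + 1 + E) * V \<le> m + (E + 1) * V"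
proof -
  have "m div V * V + m mod V = m" and "m mod V < V"
    using assms by simp_all
  then show "m + E * V \<le> (m div V + 1 + E) * V" and "(m div V + 1 + E) * V \<le> m + (E + 1) * V"
    unfolding add_mult_distrib by linarith+
qed

lemma paul_wins_below_profile_endgame:
  assumes R0: "\<forall>r\<ge>R0. k * k * binom_le r k \<le> 2 ^ r" and R: "k * k * k + R0 \<le> R"
    and n: "n * binom_le q k \<le> 2 * 2 ^ q" and q: "R + 2 * k * 2 ^ R + k \<le> q"
    and profile: "below_profile k n (q - R) x" and W: "2 ^ R \<le> weight k R x"
  shows "paul_wins k R x"
proof -
  have "\<forall>i<k. n * ((q - R) choose i) < 2 ^ (q - R)"
    using choose_mult_less_power[of n R "q - R" k] n q by simp
  then have few: "\<forall>i<k. x i \<le> k"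
    using below_profile_le[OF profile] by blast
  show ?thesis
    using paul_wins_endgame[OF R0 low_count_le[OF few]] lie_budget_le[OF few] R W by simp
qed

lemma paul_wins_init_state:
  assumes R0: "\<forall>r\<ge>R0. 2 * (k + 1) ^ 3 * binom_le r k ^ 2 \<le> 2 ^ r"
    and q_large: "2 * ((k + 1) * 4 ^ k + 1) * binom_le q k ^ 2 \<le> 2 ^ q"
    and q_ge: "k * k * k + R0 + 2 * k * 2 ^ (k * k * k + R0) + k \<le> q"
  shows "paul_wins k q (init_state (2 ^ q div binom_le q k + 1 + (k + 1) * 4 ^ k))"
proof -
  define V E Re where "V = binom_le q k" and "E = (k + 1) * 4 ^ k" and "Re = k * k * k + R0"
  define n where "n = 2 ^ q div V + 1 + E"
  have "0 < V"
    unfolding V_def by (rule binom_le_pos)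
  then have n_lower_E: "2 ^ q + E * V \<le> n * V" and n_upper: "n * V \<le> 2 ^ q + (E + 1) * V"
    unfolding n_def by (rule div_Suc_add_mult_bounds)+
  then have n_lower: "2 ^ q \<le> n * V"
    by simp
  have "(E + 1) * V \<le> 2 * ((E + 1) * V * V)"
    using \<open>0 < V\<close> by simp
  also have "\<dots> \<le> 2 ^ q"
    using q_large unfolding V_def E_def power2_eq_square by (simp only: mult.assoc)
  finally have n_upper': "n * V \<le> 2 * 2 ^ q"
    using n_upper by simp
  have R0': "\<forall>r\<ge>R0. k * k * binom_le r k \<le> 2 ^ r"
  proof (intro allI impI)
    fix r assume "R0 \<le> r"
    have "k * k * binom_le r k \<le> (2 * (k + 1) ^ 3) * (binom_le r k * binom_le r k)"
      using binom_le_pos[of r k] by (rule_tac mult_le_mono) (simp_all add: power3_eq_cube)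
    then show "k * k * binom_le r k \<le> 2 ^ r"
      using R0 \<open>R0 \<le> r\<close> unfolding power2_eq_square by (meson order_trans)
  qed
  have middle: "paul_wins k s x"
    if "Re \<le> s" "s \<le> q - 2 * k" "below_profile k n (q - s) x" "2 ^ s \<le> weight k s x" for s x
  proof (rule paul_wins_middle[OF _ _ diff_le_self that])
    show "paul_wins k Re y" if "below_profile k n (q - Re) y" "2 ^ Re \<le> weight k Re y" for y
      using paul_wins_below_profile_endgame[OF R0' _ _ _ that] n_upper' q_ge unfolding Re_def V_def by simp
    show "n * (binom_le q k - ((q - s) choose k)) + 2 ^ (q - s) * ((k * k + k) * binom_le s k) \<le> 2 ^ q"
      if "Re < s" "s \<le> q - 2 * k" for s
      using that balance_condition[of "q - s" s q k E n] R0 q_large n_lower n_upper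
      unfolding Re_def E_def V_def by simp
  qed
  have init_weight: "2 ^ q + (2 ^ (2 * k) - 1) * (k * V + 1) \<le> weight k q (init_state n)"
  proof -
    have "(2 ^ (2 * k) - 1) * (k * V + 1) \<le> 4 ^ k * ((k + 1) * V)"
      using \<open>0 < V\<close> by (intro mult_le_mono) (simp_all add: power_mult)
    also have "\<dots> = E * V"
      unfolding E_def by (simp only: mult.assoc mult.commute mult.left_commute)
    finally show ?thesis
      using n_lower_E unfolding weight_init_state V_def by simp
  qed
  have "2 * k * 1 \<le> 2 * k * 2 ^ Re"
    by (intro mult_le_mono2) simp
  then have "Re + 2 * k \<le> q"
    using q_ge unfolding Re_def by linarith
  then have "paul_wins k (q - 2 * k + 2 * k) (init_state n)"
    using paul_wins_opening[of k n "2 * k" q "k * V + 1" "2 * k" "init_state n"] middle[of "q - 2 * k"]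
      below_profile_init_state init_weight
    unfolding V_def by simp
  then show ?thesis
    using \<open>Re + 2 * k \<le> q\<close> unfolding n_def V_def E_def by simp
qed

lemma eventually_paul_wins:
  "eventually (\<lambda>q. paul_wins k q (init_state (2 ^ q div binom_le q k + 1 + (k + 1) * 4 ^ k))) sequentially"
proof -
  obtain R0 where R0: "\<forall>r\<ge>R0. 2 * (k + 1) ^ 3 * binom_le r k ^ 2 \<le> 2 ^ r"
    using eventually_binom_le_sq_le_power[of "2 * (k + 1) ^ 3" k] unfolding eventually_sequentially by blast
  have "eventually (\<lambda>q. 2 * ((k + 1) * 4 ^ k + 1) * binom_le q k ^ 2 \<le> 2 ^ q) sequentially"
    by (rule eventually_binom_le_sq_le_power)
  moreover have "eventually (\<lambda>q. k * k * k + R0 + 2 * k * 2 ^ (k * k * k + R0) + k \<le> q) sequentially"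
    by (rule eventually_ge_at_top)
  ultimately show ?thesis
    by eventually_elim (rule paul_wins_init_state[OF R0])
qed

theorem theorem3:
  fixes k :: nat
  shows "\<exists>(qs::nat) (C::real). \<forall>q\<ge>qs.
           2 ^ q / real (binom_le q k) \<le> real (Fstar k q) \<and>
           real (Fstar k q) \<le> 2 ^ q / real (binom_le q k) + C"
proof -
  obtain qs where wins: "\<And>q. qs \<le> q \<Longrightarrow>
      paul_wins k q (init_state (2 ^ q div binom_le q k + 1 + (k + 1) * 4 ^ k))"
    using eventually_paul_wins[of k] unfolding eventually_sequentially by blast
  have "2 ^ q / real (binom_le q k) \<le> real (Fstar k q) \<and>
      real (Fstar k q) \<le> 2 ^ q / real (binom_le q k) + real ((k + 1) * 4 ^ k + 1)"
    if "qs \<le> q" for q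
  proof -
    have "real (2 ^ q div binom_le q k) \<le> 2 ^ q / real (binom_le q k)"
      using of_nat_div_le_of_nat[of "2 ^ q" "binom_le q k"] by simp
    moreover have "Fstar k q \<le> 2 ^ q div binom_le q k + 1 + (k + 1) * 4 ^ k"
      using wins[OF that] by (rule Fstar_le)
    ultimately show ?thesis
      using Fstar_ge[OF wins[OF that]] by (simp add: of_nat_le_iff[symmetric, where 'a=real])
  qed
  then show ?thesis
    by blast
qed

end
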